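(* For $i\ne j\in\{1,2\}$ let $a_i=\exp\left(-\frac{\gamma_i}{p_i\ell(r_{ii})}\right)$ and $b_i=\exp\left(-\frac{\gamma_i}{p_i\ell(r_{ii})}\right)\left[1+\gamma_i\frac{p_j\ell(r_{ji})}{p_i\ell(r_{ii})}\right]^{-1}$, with all $p_i,\gamma_i,\ell(r_{ab})>0$. Then $\frac{b_1}{a_1}+\frac{b_2}{a_2}\ge 1$ (and hence the stability region $\mathcal{R}^{\mathrm{IAN}}=\mathcal{R}_1\cup\mathcal{R}_2$ is convex) if and only if $$\gamma_1\gamma_2\le\frac{\ell(r_{11})\ell(r_{22})}{\ell(r_{12})\ell(r_{21})}.$$
   Context: Two-user interference channel with Rayleigh fading (unit-mean exponential channel power gains, independent), unit noise power, transmit powers $p_i$, SINR thresholds $\gamma_i$, distances $r_{ab}$ from transmitter $S_a$ to receiver $D_b$, and non-increasing pathloss $\ell$. $a_i$ is the probability that $D_i$ decodes $S_i$ when only $S_i$ transmits; $b_i$ is that probability when both transmit and both receivers treat interference as noise (IAN). The stability region is $\mathcal{R}_1\cup\mathcal{R}_2$ with $\mathcal{R}_1=\{(\lambda_1,\lambda_2):\lambda_1/a_1+(a_1-b_1)\lambda_2/(a_1b_2)<1,\ \lambda_2<b_2\}$ and $\mathcal{R}_2=\{(\lambda_1,\lambda_2):\lambda_2/a_2+(a_2-b_2)\lambda_1/(a_2b_1)<1,\ \lambda_1<b_1\}$. *)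

theory Defs
  imports "HOL-Analysis.Analysis"
begin

text \<open>Two-user interference channel. Users are indexed by 1 and 2.
  p i: transmit power of S_i, g i: SINR threshold gamma_i,
  L: pathloss function, r a b: distance from S_a to D_b.\<close>

definition succ_alone :: "(nat \<Rightarrow> real) \<Rightarrow> (nat \<Rightarrow> real) \<Rightarrow> (real \<Rightarrow> real)
    \<Rightarrow> (nat \<Rightarrow> nat \<Rightarrow> real) \<Rightarrow> nat \<Rightarrow> real" where
  "succ_alone p g L r i = exp (- g i / (p i * L (r i i)))"

definition succ_IAN :: "(nat \<Rightarrow> real) \<Rightarrow> (nat \<Rightarrow> real) \<Rightarrow> (real \<Rightarrow> real)
    \<Rightarrow> (nat \<Rightarrow> nat \<Rightarrow> real) \<Rightarrow> nat \<Rightarrow> nat \<Rightarrow> real" where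
  "succ_IAN p g L r i j = exp (- g i / (p i * L (r i i)))
      * inverse (1 + g i * (p j * L (r j i)) / (p i * L (r i i)))"

definition region1 :: "real \<Rightarrow> real \<Rightarrow> real \<Rightarrow> real \<Rightarrow> (real \<times> real) set" where
  "region1 a1 a2 b1 b2 = {(l1, l2). 0 \<le> l1 \<and> 0 \<le> l2 \<and>
      l1 / a1 + (a1 - b1) * l2 / (a1 * b2) < 1 \<and> l2 < b2}"

definition region2 :: "real \<Rightarrow> real \<Rightarrow> real \<Rightarrow> real \<Rightarrow> (real \<times> real) set" where
  "region2 a1 a2 b1 b2 = {(l1, l2). 0 \<le> l1 \<and> 0 \<le> l2 \<and>
      l2 / a2 + (a2 - b2) * l1 / (a2 * b1) < 1 \<and> l1 < b1}"

end

theory Submission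
  imports Defs
begin

text \<open>Write \<open>x\<^sub>i = \<gamma>\<^sub>i p\<^sub>j \<ell>(r\<^sub>j\<^sub>i) / (p\<^sub>i \<ell>(r\<^sub>i\<^sub>i))\<close>. The exponential factors cancel, so
  \<open>b\<^sub>i / a\<^sub>i = 1 / (1 + x\<^sub>i)\<close>, and clearing denominators turns
  \<open>1/(1 + x\<^sub>1) + 1/(1 + x\<^sub>2) \<ge> 1\<close> into \<open>x\<^sub>1 x\<^sub>2 \<le> 1\<close>, which is the stated
  condition on \<open>\<gamma>\<^sub>1 \<gamma>\<^sub>2\<close>. For convexity, when \<open>b\<^sub>1/a\<^sub>1 + b\<^sub>2/a\<^sub>2 \<ge> 1\<close> each point
  of \<open>\<R>\<^sub>1\<close> also satisfies the linear constraint defining \<open>\<R>\<^sub>2\<close> and vice versa,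
  so \<open>\<R>\<^sub>1 \<union> \<R>\<^sub>2\<close> is the intersection of the quadrant with the two open
  half-planes, a convex set.\<close>

lemma succ_IAN_div_succ_alone:
  "succ_IAN p g L r i j / succ_alone p g L r i
     = inverse (1 + g i * (p j * L (r j i)) / (p i * L (r i i)))"
  unfolding succ_IAN_def succ_alone_def by simp

lemma inverse_one_plus_add_ge_one_iff:
  fixes x y :: real
  assumes "-1 < x" "-1 < y"
  shows "inverse (1 + x) + inverse (1 + y) \<ge> 1 \<longleftrightarrow> x * y \<le> 1"
proof -
  have pos: "(1 + x) * (1 + y) > 0" using assms by simp
  have "inverse (1 + x) + inverse (1 + y) = ((1 + y) + (1 + x)) / ((1 + x) * (1 + y))"
    using assms by (simp add: field_simps)
  then have "inverse (1 + x) + inverse (1 + y) \<ge> 1 \<longleftrightarrow> (1 + x) * (1 + y) \<le> (1 + y) + (1 + x)"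
    using pos by (simp add: le_divide_eq)
  also have "\<dots> \<longleftrightarrow> x * y \<le> 1" by (simp add: algebra_simps)
  finally show ?thesis .
qed

text \<open>The constraints in normalised coordinates \<open>x = \<lambda>\<^sub>1/a\<^sub>1\<close>, \<open>y = \<lambda>\<^sub>2/a\<^sub>2\<close>,
  \<open>u = b\<^sub>1/a\<^sub>1\<close>, \<open>v = b\<^sub>2/a\<^sub>2\<close>. The key estimate is
  \<open>v (u y + (1 - v) x) < u v\<close>, obtained by adding \<open>(1 - v)\<close> times the first
  constraint to \<open>(u + v - 1)(y - v) \<le> 0\<close>.\<close>

lemma normalised_constraint_transfer:
  fixes x y u v :: real
  assumes "0 < u" "u \<le> 1" "0 < v" "v \<le> 1" "1 \<le> u + v" "0 \<le> x" "0 \<le> y"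
    and first: "x + (1 - u) * y / v < 1" and "y < v"
  shows "y + (1 - v) * x / u < 1"
proof -
  have first': "x * v + (1 - u) * y < v" using first \<open>0 < v\<close> by (simp add: field_simps)
  have "u * y + (1 - v) * x < u"
  proof (cases "v = 1")
    case True
    then show ?thesis using assms by simp
  next
    case False
    then have "(1 - v) * (x * v + (1 - u) * y) < (1 - v) * v"
      using first' \<open>v \<le> 1\<close> by simp
    moreover have "(u + v - 1) * (y - v) \<le> 0"
      using assms by (intro mult_nonneg_nonpos) auto
    ultimately have "v * (u * y + (1 - v) * x) < v * u" by (simp add: algebra_simps)
    then show ?thesis using \<open>0 < v\<close> by simp
  qed
  then show ?thesis using \<open>0 < u\<close> by (simp add: field_simps)
qed

lemma region1_imp_second_constraint:
  fixes a1 a2 b1 b2 l1 l2 :: real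
  assumes "0 < b1" "b1 \<le> a1" "0 < b2" "b2 \<le> a2" "1 \<le> b1 / a1 + b2 / a2"
    and "(l1, l2) \<in> region1 a1 a2 b1 b2"
  shows "l2 / a2 + (a2 - b2) * l1 / (a2 * b1) < 1"
proof -
  have a: "0 < a1" "0 < a2" using assms by linarith+
  have "0 \<le> l1" "0 \<le> l2" "l2 < b2" "l1 / a1 + (a1 - b1) * l2 / (a1 * b2) < 1"
    using assms(6) by (auto simp: region1_def)
  moreover have "l1 / a1 + (a1 - b1) * l2 / (a1 * b2) = l1 / a1 + (1 - b1 / a1) * (l2 / a2) / (b2 / a2)"
    using a \<open>0 < b2\<close> by (simp add: field_simps)
  ultimately have "l1 / a1 + (1 - b1 / a1) * (l2 / a2) / (b2 / a2) < 1"
    and "l2 / a2 < b2 / a2" "0 \<le> l1 / a1" "0 \<le> l2 / a2"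
    using a by (simp_all add: divide_strict_right_mono)
  then have "l2 / a2 + (1 - b2 / a2) * (l1 / a1) / (b1 / a1) < 1"
    using assms a
    by (intro normalised_constraint_transfer[where u = "b1 / a1" and v = "b2 / a2"]) auto
  moreover have "l2 / a2 + (a2 - b2) * l1 / (a2 * b1) = l2 / a2 + (1 - b2 / a2) * (l1 / a1) / (b1 / a1)"
    using a \<open>0 < b1\<close> by (simp add: field_simps)
  ultimately show ?thesis by simp
qed

lemma region2_swap:
  "(l1, l2) \<in> region2 a1 a2 b1 b2 \<longleftrightarrow> (l2, l1) \<in> region1 a2 a1 b2 b1"
  unfolding region1_def region2_def by auto

definition region_both :: "real \<Rightarrow> real \<Rightarrow> real \<Rightarrow> real \<Rightarrow> (real \<times> real) set" where
  "region_both a1 a2 b1 b2 = {(l1, l2). 0 \<le> l1 \<and> 0 \<le> l2 \<and>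
      l1 / a1 + (a1 - b1) * l2 / (a1 * b2) < 1 \<and> l2 / a2 + (a2 - b2) * l1 / (a2 * b1) < 1}"

lemma convex_region_both: "convex (region_both a1 a2 b1 b2)"
proof -
  have "region_both a1 a2 b1 b2 =
      {z. inner (1, 0) z \<ge> 0} \<inter> {z. inner (0, 1) z \<ge> 0}
      \<inter> {z. inner (1 / a1, (a1 - b1) / (a1 * b2)) z < 1}
      \<inter> {z. inner ((a2 - b2) / (a2 * b1), 1 / a2) z < 1}"
    by (auto simp: region_both_def inner_prod_def)
  then show ?thesis
    by (simp add: convex_Int convex_halfspace_ge convex_halfspace_lt)
qed

lemma region_union_eq_region_both:
  assumes "0 < b1" "b1 \<le> a1" "0 < b2" "b2 \<le> a2" "1 \<le> b1 / a1 + b2 / a2"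
  shows "region1 a1 a2 b1 b2 \<union> region2 a1 a2 b1 b2 = region_both a1 a2 b1 b2"
proof (intro equalityI subsetI)
  fix z assume "z \<in> region1 a1 a2 b1 b2 \<union> region2 a1 a2 b1 b2"
  moreover obtain l1 l2 where z: "z = (l1, l2)" by fastforce
  moreover have "1 \<le> b2 / a2 + b1 / a1" using assms(5) by simp
  ultimately show "z \<in> region_both a1 a2 b1 b2"
    using region1_imp_second_constraint[OF assms, of l1 l2]
      region1_imp_second_constraint[of b2 a2 b1 a1 l2 l1] assms
    by (auto simp: region2_swap) (auto simp: region_both_def region1_def region2_def)
next
  fix z assume "z \<in> region_both a1 a2 b1 b2"
  then obtain l1 l2 where z: "z = (l1, l2)" and "0 \<le> l1" "0 \<le> l2"
    and first: "l1 / a1 + (a1 - b1) * l2 / (a1 * b2) < 1"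
    and second: "l2 / a2 + (a2 - b2) * l1 / (a2 * b1) < 1"
    unfolding region_both_def by auto
  have "l2 < b2 \<or> l1 < b1"
  proof (rule ccontr)
    assume "\<not> ?thesis"
    then have "b2 \<le> l2" "b1 \<le> l1" by auto
    have "(a1 - b1) * b2 / (a1 * b2) \<le> (a1 - b1) * l2 / (a1 * b2)"
      using \<open>b2 \<le> l2\<close> assms by (intro divide_right_mono mult_left_mono) auto
    moreover have "b1 / a1 \<le> l1 / a1" using \<open>b1 \<le> l1\<close> assms by (simp add: divide_right_mono)
    moreover have "b1 / a1 + (a1 - b1) * b2 / (a1 * b2) = 1" using assms by (simp add: field_simps)
    ultimately show False using first by linarith
  qed
  then show "z \<in> region1 a1 a2 b1 b2 \<union> region2 a1 a2 b1 b2"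
    unfolding z region1_def region2_def using \<open>0 \<le> l1\<close> \<open>0 \<le> l2\<close> first second by blast
qed

theorem mainTheorem6:
  fixes p g :: "nat \<Rightarrow> real" and L :: "real \<Rightarrow> real" and r :: "nat \<Rightarrow> nat \<Rightarrow> real"
  assumes p_pos: "p 1 > 0" "p 2 > 0"
    and g_pos: "g 1 > 0" "g 2 > 0"
    and r_pos: "\<And>a b. a \<in> {1,2} \<Longrightarrow> b \<in> {1,2} \<Longrightarrow> r a b > 0"
    and l_pos: "\<And>a b. a \<in> {1,2} \<Longrightarrow> b \<in> {1,2} \<Longrightarrow> L (r a b) > 0"
    and l_noninc: "\<And>x y. 0 < x \<Longrightarrow> x \<le> y \<Longrightarrow> L y \<le> L x"
  defines "a1 \<equiv> succ_alone p g L r 1" and "a2 \<equiv> succ_alone p g L r 2"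
    and "b1 \<equiv> succ_IAN p g L r 1 2" and "b2 \<equiv> succ_IAN p g L r 2 1"
  shows "(b1 / a1 + b2 / a2 \<ge> 1 \<longleftrightarrow>
            g 1 * g 2 \<le> L (r 1 1) * L (r 2 2) / (L (r 1 2) * L (r 2 1)))
         \<and> (b1 / a1 + b2 / a2 \<ge> 1 \<longrightarrow> convex (region1 a1 a2 b1 b2 \<union> region2 a1 a2 b1 b2))"
proof -
  have L: "L (r 1 1) > 0" "L (r 2 2) > 0" "L (r 1 2) > 0" "L (r 2 1) > 0"
    using l_pos by auto
  define x1 where "x1 = g 1 * (p 2 * L (r 2 1)) / (p 1 * L (r 1 1))"
  define x2 where "x2 = g 2 * (p 1 * L (r 1 2)) / (p 2 * L (r 2 2))"
  have x_pos: "0 < x1" "0 < x2" unfolding x1_def x2_def using p_pos g_pos L by auto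
  have ratio: "b1 / a1 = inverse (1 + x1)" "b2 / a2 = inverse (1 + x2)"
    unfolding a1_def a2_def b1_def b2_def x1_def x2_def by (simp_all only: succ_IAN_div_succ_alone)
  have a_pos: "0 < a1" "0 < a2" unfolding a1_def a2_def succ_alone_def by auto
  have "0 < b1 / a1" "b1 / a1 \<le> 1" "0 < b2 / a2" "b2 / a2 \<le> 1"
    unfolding ratio using x_pos by (simp_all add: inverse_le_1_iff)
  then have b: "0 < b1" "b1 \<le> a1" "0 < b2" "b2 \<le> a2"
    using a_pos by (simp_all add: divide_le_eq_1 zero_less_divide_iff)
  have "x1 * x2 = g 1 * g 2 * (L (r 1 2) * L (r 2 1)) / (L (r 1 1) * L (r 2 2))"
    unfolding x1_def x2_def using p_pos by (simp add: field_simps)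
  also have "\<dots> \<le> 1 \<longleftrightarrow> g 1 * g 2 * (L (r 1 2) * L (r 2 1)) \<le> L (r 1 1) * L (r 2 2)"
    using mult_pos_pos[OF L(1,2)] by (simp add: pos_divide_le_eq)
  also have "\<dots> \<longleftrightarrow> g 1 * g 2 \<le> L (r 1 1) * L (r 2 2) / (L (r 1 2) * L (r 2 1))"
    using L by (simp add: le_divide_eq)
  finally have "x1 * x2 \<le> 1 \<longleftrightarrow> g 1 * g 2 \<le> L (r 1 1) * L (r 2 2) / (L (r 1 2) * L (r 2 1))" .
  then show ?thesis
    using inverse_one_plus_add_ge_one_iff[of x1 x2] x_pos ratio
      region_union_eq_region_both[OF b] convex_region_both
    by auto
qed

end
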